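(* Let $n\ge 2$ and let $T$ be a uniformly random shifted standard Young tableau of shape $[\Delta_n]^{\mathrm{sh}}$. For every column $c$ with $1\le c<n-1$, the expected number of horizontal adjacencies of $T$ lying in column $c$ equals $1$; and for every row $r$ with $1\le r<n-1$, the expected number of vertical adjacencies of $T$ lying in row $r$ equals $1$.
   Context: $\Delta_n=(n-1,\dots,1)$, $[\Delta_n]^{\mathrm{sh}}=\{(i,j):1\le i\le j\le n-1\}$ (row $i$, column $j$). A shifted standard Young tableau of this shape is a bijection $T$ onto $[\binom n2]$ increasing along rows and columns. For $u=(i,j)$ in the shape, $(T,u)$ is a horizontal adjacency if $(i,j+1)$ is in the shape and $T(i,j+1)=T(u)+1$, a vertical adjacency if $(i+1,j)$ is in the shape and $T(i+1,j)=T(u)+1$; it lies in column $j$ and row $i$. *)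

theory Defs
  imports Complex_Main "HOL-Library.FuncSet"
begin

(* Shifted staircase shape [Delta_n]^sh = {(i,j). 1 <= i <= j <= n-1}; (i,j) = (row, column). *)
definition stair_shape :: "nat \<Rightarrow> (nat \<times> nat) set" where
  "stair_shape n = {(i, j). 1 \<le> i \<and> i \<le> j \<and> j \<le> n - 1}"

(* Represented as extensional functions
   (value undefined outside the shape) so that the set of tableaux is finite. *)
definition shifted_SYT :: "nat \<Rightarrow> ((nat \<times> nat) \<Rightarrow> nat) set" where
  "shifted_SYT n = {T. T \<in> extensional (stair_shape n)
      \<and> bij_betw T (stair_shape n) {1 .. n choose 2}
      \<and> (\<forall>i j. (i, j) \<in> stair_shape n \<and> (i, j + 1) \<in> stair_shape n \<longrightarrow> T (i, j) < T (i, j + 1))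
      \<and> (\<forall>i j. (i, j) \<in> stair_shape n \<and> (i + 1, j) \<in> stair_shape n \<longrightarrow> T (i, j) < T (i + 1, j))}"

definition horiz_adj :: "nat \<Rightarrow> ((nat \<times> nat) \<Rightarrow> nat) \<Rightarrow> nat \<times> nat \<Rightarrow> bool" where
  "horiz_adj n T u = (case u of (i, j) \<Rightarrow>
      (i, j) \<in> stair_shape n \<and> (i, j + 1) \<in> stair_shape n \<and> T (i, j + 1) = T (i, j) + 1)"

definition vert_adj :: "nat \<Rightarrow> ((nat \<times> nat) \<Rightarrow> nat) \<Rightarrow> nat \<times> nat \<Rightarrow> bool" where
  "vert_adj n T u = (case u of (i, j) \<Rightarrow>
      (i, j) \<in> stair_shape n \<and> (i + 1, j) \<in> stair_shape n \<and> T (i + 1, j) = T (i, j) + 1)"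

definition horiz_in_col :: "nat \<Rightarrow> ((nat \<times> nat) \<Rightarrow> nat) \<Rightarrow> nat \<Rightarrow> nat" where
  "horiz_in_col n T c = card {u \<in> stair_shape n. snd u = c \<and> horiz_adj n T u}"

definition vert_in_row :: "nat \<Rightarrow> ((nat \<times> nat) \<Rightarrow> nat) \<Rightarrow> nat \<Rightarrow> nat" where
  "vert_in_row n T r = card {u \<in> stair_shape n. fst u = r \<and> vert_adj n T u}"

definition uniform_expect :: "'a set \<Rightarrow> ('a \<Rightarrow> nat) \<Rightarrow> real" where
  "uniform_expect S f = (\<Sum>x\<in>S. real (f x)) / real (card S)"

end

theory Submission
  imports Defs "HOL-Combinatorics.Transposition"
begin

text \<open>Let \<open>A\<close> be the cells strictly right of column \<open>c\<close> (or strictly below row \<open>r\<close>). It is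
closed under moving right or down, misses the corner \<open>(1,1)\<close> and contains \<open>(n-1,n-1)\<close>, so
reading a tableau in the order \<open>1, 2, \<dots>, N\<close> the walk steps into \<open>A\<close> exactly once more often
than it steps out of \<open>A\<close>. If a step into \<open>A\<close> from \<open>k\<close> to \<open>k+1\<close> joins two cells that are not
neighbours, exchanging the entries \<open>k\<close> and \<open>k+1\<close> gives another tableau in which that step
leaves \<open>A\<close>; this is a bijection between such steps and all steps out of \<open>A\<close>, over all
tableaux at once. Hence the steps into \<open>A\<close> between neighbouring cells number, summed over all
tableaux, exactly the number of tableaux, and these steps are precisely the horizontal
adjacencies in column \<open>c\<close> (vertical adjacencies in row \<open>r\<close>).\<close>

lemma card_entries_exits_interval:
  assumes "N \<ge> 1"
  shows "card {k \<in> {1..<N}. k \<notin> M \<and> Suc k \<in> M} + of_bool (1 \<in> M)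
       = card {k \<in> {1..<N}. k \<in> M \<and> Suc k \<notin> M} + of_bool (N \<in> M)"
  using assms
proof (induction N rule: nat_induct_at_least)
  case base
  then show ?case by simp
next
  case (Suc N)
  have split: "{k \<in> {1..<Suc N}. P k} = (if P N then insert N {k \<in> {1..<N}. P k} else {k \<in> {1..<N}. P k})" for P
    using Suc.hyps by (auto simp: less_Suc_eq)
  show ?case
    unfolding split[of "\<lambda>k. k \<notin> M \<and> Suc k \<in> M"] split[of "\<lambda>k. k \<in> M \<and> Suc k \<notin> M"]
    using Suc.IH by (cases "N \<in> M"; cases "Suc N \<in> M") simp_all
qed

lemma card_consecutive_pairs:
  assumes T: "bij_betw T S {1..N}" and A: "A \<subseteq> S"
  shows "card {(u, v). u \<in> S \<and> v \<in> S \<and> T v = Suc (T u) \<and> P (u \<in> A) (v \<in> A)}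
       = card {k \<in> {1..<N}. P (k \<in> T ` A) (Suc k \<in> T ` A)}"
proof -
  let ?f = "inv_into S T"
  let ?K = "{k \<in> {1..<N}. P (k \<in> T ` A) (Suc k \<in> T ` A)}"
  have f: "?f k \<in> S" "T (?f k) = k" if "k \<in> {1..N}" for k
    using that T by (auto simp: bij_betw_def inv_into_into f_inv_into_f)
  have mem: "x \<in> S \<Longrightarrow> T x \<in> T ` A \<longleftrightarrow> x \<in> A" for x
    using inj_on_image_mem_iff[OF bij_betw_imp_inj_on[OF T] _ A] .
  have "{(u, v). u \<in> S \<and> v \<in> S \<and> T v = Suc (T u) \<and> P (u \<in> A) (v \<in> A)} = (\<lambda>k. (?f k, ?f (Suc k))) ` ?K"
  proof (intro equalityI subsetI)
    fix p assume "p \<in> {(u, v). u \<in> S \<and> v \<in> S \<and> T v = Suc (T u) \<and> P (u \<in> A) (v \<in> A)}"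
    then obtain u v where p: "p = (u, v)" "u \<in> S" "v \<in> S" "T v = Suc (T u)" "P (u \<in> A) (v \<in> A)"
      by blast
    have "Suc (T u) \<in> T ` A \<longleftrightarrow> v \<in> A" using mem[OF p(3)] p(4) by simp
    then have "T u \<in> ?K" using p bij_betw_apply[OF T, of u] bij_betw_apply[OF T, of v] mem by auto
    moreover have "p = (?f (T u), ?f (Suc (T u)))"
      using p T by (metis bij_betw_imp_inj_on inv_into_f_f)
    ultimately show "p \<in> (\<lambda>k. (?f k, ?f (Suc k))) ` ?K" by blast
  next
    fix p assume "p \<in> (\<lambda>k. (?f k, ?f (Suc k))) ` ?K"
    then obtain k where k: "k \<in> ?K" "p = (?f k, ?f (Suc k))" by blast
    then have "?f k \<in> S" "?f (Suc k) \<in> S" "T (?f k) = k" "T (?f (Suc k)) = Suc k"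
      using f[of k] f[of "Suc k"] by auto
    then show "p \<in> {(u, v). u \<in> S \<and> v \<in> S \<and> T v = Suc (T u) \<and> P (u \<in> A) (v \<in> A)}"
      using k mem[of "?f k"] mem[of "?f (Suc k)"] by auto
  qed
  moreover have "inj_on (\<lambda>k. (?f k, ?f (Suc k))) ?K"
  proof (rule inj_onI)
    fix k l assume "k \<in> ?K" "l \<in> ?K" "(?f k, ?f (Suc k)) = (?f l, ?f (Suc l))"
    then have "T (?f k) = T (?f l)" by simp
    with \<open>k \<in> ?K\<close> \<open>l \<in> ?K\<close> show "k = l" using f(2)[of k] f(2)[of l] by simp
  qed
  ultimately show ?thesis by (simp add: card_image)
qed

lemma transpose_consecutive_less:
  assumes T: "inj_on T S" and uv: "u \<in> S" "v \<in> S" "T v = Suc (T u)"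
    and xy: "x \<in> S" "y \<in> S" "T x < T y" "(x, y) \<noteq> (u, v)"
  shows "T (transpose u v x) < T (transpose u v y)"
proof -
  have "x \<noteq> u \<Longrightarrow> T x \<noteq> T u" "x \<noteq> v \<Longrightarrow> T x \<noteq> T v"
    "y \<noteq> u \<Longrightarrow> T y \<noteq> T u" "y \<noteq> v \<Longrightarrow> T y \<noteq> T v"
    using inj_onD[OF T] uv(1,2) xy(1,2) by metis+
  then show ?thesis
    using uv(3) xy(3,4) by (cases "x = u"; cases "x = v"; cases "y = u"; cases "y = v") auto
qed

lemma uniform_expect_eq_1:
  assumes "finite S" "S \<noteq> {}" "(\<Sum>x\<in>S. f x) = card S"
  shows "uniform_expect S f = 1"
  using assms by (simp add: uniform_expect_def flip: of_nat_sum)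

lemma finite_stair_shape: "finite (stair_shape n)"
  by (rule finite_subset[of _ "{0..n} \<times> {0..n}"]) (auto simp: stair_shape_def)

lemma finite_shifted_SYT: "finite (shifted_SYT n)"
proof (rule finite_subset)
  show "shifted_SYT n \<subseteq> PiE (stair_shape n) (\<lambda>_. {1..n choose 2})"
    by (auto simp: shifted_SYT_def PiE_def Pi_def bij_betw_def)
qed (simp add: finite_PiE finite_stair_shape)

definition next_cell :: "nat \<times> nat \<Rightarrow> nat \<times> nat \<Rightarrow> bool" where
  "next_cell u v \<longleftrightarrow> v = (fst u, snd u + 1) \<or> v = (fst u + 1, snd u)"

lemma shifted_SYT_intro:
  assumes "T \<in> extensional (stair_shape n)" "bij_betw T (stair_shape n) {1..n choose 2}"
    and "\<And>u v. u \<in> stair_shape n \<Longrightarrow> v \<in> stair_shape n \<Longrightarrow> next_cell u v \<Longrightarrow> T u < T v"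
  shows "T \<in> shifted_SYT n"
  using assms by (auto simp: shifted_SYT_def next_cell_def)

context
  fixes n :: nat and T :: "nat \<times> nat \<Rightarrow> nat"
  assumes T: "T \<in> shifted_SYT n"
begin

lemma bij_betw_shifted_SYT: "bij_betw T (stair_shape n) {1..n choose 2}"
  using T by (simp add: shifted_SYT_def)

lemma shifted_SYT_less_next_cell:
  "u \<in> stair_shape n \<Longrightarrow> v \<in> stair_shape n \<Longrightarrow> next_cell u v \<Longrightarrow> T u < T v"
  using T by (cases u) (auto simp: shifted_SYT_def next_cell_def)

lemma shifted_SYT_mono:
  assumes "(i, j) \<in> stair_shape n" "(i', j') \<in> stair_shape n" "i \<le> i'" "j \<le> j'"
  shows "T (i, j) \<le> T (i', j')"
proof -
  have row: "T (i, j) \<le> T (i, j + d)" if "(i, j + d) \<in> stair_shape n" for d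
    using that
  proof (induction d)
    case (Suc d)
    then have "(i, j + d) \<in> stair_shape n" using assms(1) by (auto simp: stair_shape_def)
    then show ?case
      using Suc shifted_SYT_less_next_cell[of "(i, j + d)" "(i, Suc (j + d))"]
      by (simp add: next_cell_def)
  qed simp
  have col: "T (i, j') \<le> T (i + d, j')" if "(i + d, j') \<in> stair_shape n" for d
    using that
  proof (induction d)
    case (Suc d)
    then have "(i + d, j') \<in> stair_shape n" using assms(1) by (auto simp: stair_shape_def)
    then show ?case
      using Suc shifted_SYT_less_next_cell[of "(i + d, j')" "(Suc (i + d), j')"]
      by (simp add: next_cell_def)
  qed simp
  have "(i, j') \<in> stair_shape n" using assms by (auto simp: stair_shape_def)
  then show ?thesis
    using row[of "j' - j"] col[of "i' - i"] assms by simp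
qed

lemma shifted_SYT_corners:
  assumes "n \<ge> 2"
  shows "T (1, 1) = 1" "T (n - 1, n - 1) = n choose 2"
proof -
  let ?S = "stair_shape n"
  have corners: "(1, 1) \<in> ?S" "(n - 1, n - 1) \<in> ?S" using assms by (auto simp: stair_shape_def)
  have "n choose 2 \<ge> 1" using assms by (simp add: Suc_leI)
  then obtain u w where u: "u \<in> ?S" "T u = 1" and w: "w \<in> ?S" "T w = n choose 2"
    using bij_betw_imp_surj_on[OF bij_betw_shifted_SYT] by (metis atLeastAtMost_iff imageE order_refl)
  have "T (1, 1) \<le> T u"
    using u corners(1) shifted_SYT_mono[of 1 1 "fst u" "snd u"] by (auto simp: stair_shape_def)
  moreover have "T w \<le> T (n - 1, n - 1)"
    using w corners(2) shifted_SYT_mono[of "fst w" "snd w" "n - 1" "n - 1"] by (auto simp: stair_shape_def)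
  moreover have "T (1, 1) \<ge> 1" "T (n - 1, n - 1) \<le> n choose 2"
    using corners bij_betw_apply[OF bij_betw_shifted_SYT] by auto
  ultimately show "T (1, 1) = 1" "T (n - 1, n - 1) = n choose 2"
    using u(2) w(2) by simp_all
qed

end

lemma shifted_SYT_transpose:
  assumes T: "T \<in> shifted_SYT n"
    and uv: "u \<in> stair_shape n" "v \<in> stair_shape n" "T v = Suc (T u)" "\<not> next_cell u v"
  shows "T \<circ> transpose u v \<in> shifted_SYT n"
proof (rule shifted_SYT_intro)
  show "T \<circ> transpose u v \<in> extensional (stair_shape n)"
    using T uv(1,2) by (auto simp: shifted_SYT_def extensional_def transpose_def)
  show "bij_betw (T \<circ> transpose u v) (stair_shape n) {1..n choose 2}"
    using bij_betw_shifted_SYT[OF T] uv(1,2) by (simp add: bij_betw_swap_iff)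
  fix x y assume xy: "x \<in> stair_shape n" "y \<in> stair_shape n" "next_cell x y"
  then have "(x, y) \<noteq> (u, v)" using uv(4) by auto
  then show "(T \<circ> transpose u v) x < (T \<circ> transpose u v) y"
    using transpose_consecutive_less[OF bij_betw_imp_inj_on[OF bij_betw_shifted_SYT[OF T]] uv(1-3) xy(1,2)]
      shifted_SYT_less_next_cell[OF T xy] by simp
qed

definition column_reading :: "nat \<times> nat \<Rightarrow> nat" where
  "column_reading = (\<lambda>(i, j). (j choose 2) + i)"

lemma Suc_choose_two: "Suc k choose 2 = (k choose 2) + k"
  by (simp add: numeral_2_eq_2)

lemma stair_shape_Suc_Suc:
  "stair_shape (Suc (Suc m)) = stair_shape (Suc m) \<union> (\<lambda>i. (i, Suc m)) ` {1..Suc m}"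
  by (auto simp: stair_shape_def)

lemma bij_betw_column_reading: "bij_betw column_reading (stair_shape (Suc m)) {1..Suc m choose 2}"
proof (induction m)
  case 0
  have "stair_shape (Suc 0) = {}" by (auto simp: stair_shape_def)
  then show ?case by (simp add: bij_betw_def)
next
  case (Suc m)
  have column: "bij_betw column_reading ((\<lambda>i. (i, Suc m)) ` {1..Suc m}) {(Suc m choose 2) + 1..(Suc m choose 2) + Suc m}"
  proof (rule bij_betw_imageI)
    show "inj_on column_reading ((\<lambda>i. (i, Suc m)) ` {1..Suc m})"
      by (auto simp: inj_on_def column_reading_def)
    have "column_reading ` (\<lambda>i. (i, Suc m)) ` {1..Suc m} = (\<lambda>i. (Suc m choose 2) + i) ` {1..Suc m}"
      by (auto simp: column_reading_def image_image)
    then show "column_reading ` (\<lambda>i. (i, Suc m)) ` {1..Suc m} = {(Suc m choose 2) + 1..(Suc m choose 2) + Suc m}"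
      by (simp add: add.commute)
  qed
  have "{1..Suc m choose 2} \<union> {(Suc m choose 2) + 1..(Suc m choose 2) + Suc m} = {1..Suc (Suc m) choose 2}"
    by (auto simp: Suc_choose_two[of "Suc m"])
  moreover have "bij_betw column_reading (stair_shape (Suc (Suc m)))
      ({1..Suc m choose 2} \<union> {(Suc m choose 2) + 1..(Suc m choose 2) + Suc m})"
    unfolding stair_shape_Suc_Suc by (rule bij_betw_combine[OF Suc.IH column]) auto
  ultimately show ?case
    by simp
qed

lemma column_reading_in_shifted_SYT: "restrict column_reading (stair_shape n) \<in> shifted_SYT n"
proof (rule shifted_SYT_intro)
  have "stair_shape n = stair_shape (Suc (n - 1))"
    by (auto simp: stair_shape_def)
  moreover have "n choose 2 = Suc (n - 1) choose 2"
    by (cases n) (simp_all add: numeral_2_eq_2)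
  ultimately show "bij_betw (restrict column_reading (stair_shape n)) (stair_shape n) {1..n choose 2}"
    using bij_betw_column_reading[of "n - 1"] by simp
  fix u v assume "u \<in> stair_shape n" "v \<in> stair_shape n" "next_cell u v"
  then show "restrict column_reading (stair_shape n) u < restrict column_reading (stair_shape n) v"
    by (auto simp: next_cell_def column_reading_def stair_shape_def Suc_choose_two)
qed simp

definition steps_into :: "nat \<Rightarrow> (nat \<times> nat) set \<Rightarrow> (nat \<times> nat \<Rightarrow> nat) \<Rightarrow> ((nat \<times> nat) \<times> (nat \<times> nat)) set" where
  "steps_into n A T = {(u, v). u \<in> stair_shape n \<and> v \<in> stair_shape n \<and> T v = Suc (T u) \<and> u \<notin> A \<and> v \<in> A}"

definition steps_out_of :: "nat \<Rightarrow> (nat \<times> nat) set \<Rightarrow> (nat \<times> nat \<Rightarrow> nat) \<Rightarrow> ((nat \<times> nat) \<times> (nat \<times> nat)) set" where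
  "steps_out_of n A T = {(u, v). u \<in> stair_shape n \<and> v \<in> stair_shape n \<and> T v = Suc (T u) \<and> u \<in> A \<and> v \<notin> A}"

lemma finite_steps_into: "finite (steps_into n A T)"
  by (rule finite_subset[of _ "stair_shape n \<times> stair_shape n"]) (auto simp: steps_into_def finite_stair_shape)

lemma finite_steps_out_of: "finite (steps_out_of n A T)"
  by (rule finite_subset[of _ "stair_shape n \<times> stair_shape n"]) (auto simp: steps_out_of_def finite_stair_shape)

lemma card_steps_into:
  assumes T: "T \<in> shifted_SYT n" and "n \<ge> 2"
    and A: "A \<subseteq> stair_shape n" "(1, 1) \<notin> A" "(n - 1, n - 1) \<in> A"
  shows "card (steps_into n A T) = Suc (card (steps_out_of n A T))"
proof -
  let ?N = "n choose 2"
  note bij = bij_betw_shifted_SYT[OF T]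
  have "card (steps_into n A T) = card {k \<in> {1..<?N}. k \<notin> T ` A \<and> Suc k \<in> T ` A}"
    using card_consecutive_pairs[OF bij A(1), of "\<lambda>a b. \<not> a \<and> b"] by (simp add: steps_into_def)
  moreover have "card (steps_out_of n A T) = card {k \<in> {1..<?N}. k \<in> T ` A \<and> Suc k \<notin> T ` A}"
    using card_consecutive_pairs[OF bij A(1), of "\<lambda>a b. a \<and> \<not> b"] by (simp add: steps_out_of_def)
  moreover have "1 \<notin> T ` A" "?N \<in> T ` A"
  proof -
    have "(1, 1) \<in> stair_shape n" "(n - 1, n - 1) \<in> stair_shape n"
      using \<open>n \<ge> 2\<close> by (auto simp: stair_shape_def)
    then show "1 \<notin> T ` A" "?N \<in> T ` A"
      using inj_on_image_mem_iff[OF bij_betw_imp_inj_on[OF bij] _ A(1)] shifted_SYT_corners[OF T \<open>n \<ge> 2\<close>] A(2,3)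
      by metis+
  qed
  moreover have "?N \<ge> 1" using \<open>n \<ge> 2\<close> by (simp add: Suc_leI)
  ultimately show ?thesis
    using card_entries_exits_interval[of ?N "T ` A"] by simp
qed

lemma bij_betw_transpose_steps:
  assumes up: "\<And>u v. u \<in> A \<Longrightarrow> v \<in> stair_shape n \<Longrightarrow> next_cell u v \<Longrightarrow> v \<in> A"
  defines "\<sigma> \<equiv> \<lambda>(T, u, v). (T \<circ> transpose u v, v, u)"
  shows "bij_betw \<sigma> (SIGMA T:shifted_SYT n. {(u, v) \<in> steps_into n A T. \<not> next_cell u v})
                    (SIGMA T:shifted_SYT n. steps_out_of n A T)"
    (is "bij_betw \<sigma> ?I ?O")
proof -
  have "\<sigma> (\<sigma> x) = x" for x
    by (cases x) (simp add: \<sigma>_def comp_assoc transpose_commute)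
  moreover have "\<sigma> ` ?I \<subseteq> ?O"
  proof (rule image_subsetI)
    fix x assume "x \<in> ?I"
    then obtain T u v where "x = (T, u, v)" "T \<in> shifted_SYT n" "(u, v) \<in> steps_into n A T" "\<not> next_cell u v"
      by auto
    then show "\<sigma> x \<in> ?O"
      using shifted_SYT_transpose[of T n u v] by (auto simp: \<sigma>_def steps_into_def steps_out_of_def)
  qed
  moreover have "\<sigma> ` ?O \<subseteq> ?I"
  proof (rule image_subsetI)
    fix x assume "x \<in> ?O"
    then obtain T u v where x: "x = (T, u, v)" and T: "T \<in> shifted_SYT n" and uv: "(u, v) \<in> steps_out_of n A T"
      by auto
    then have "\<not> next_cell u v" "\<not> next_cell v u"
      using up[of u v] shifted_SYT_less_next_cell[OF T, of v u] by (auto simp: steps_out_of_def)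
    then show "\<sigma> x \<in> ?I"
      using x T uv shifted_SYT_transpose[of T n u v] by (auto simp: \<sigma>_def steps_into_def steps_out_of_def)
  qed
  ultimately show ?thesis
    by (intro bij_betw_byWitness[where f' = \<sigma>]) auto
qed

lemma sum_card_adjacent_steps_into:
  assumes "n \<ge> 2" and A: "A \<subseteq> stair_shape n" "(1, 1) \<notin> A" "(n - 1, n - 1) \<in> A"
    and up: "\<And>u v. u \<in> A \<Longrightarrow> v \<in> stair_shape n \<Longrightarrow> next_cell u v \<Longrightarrow> v \<in> A"
  shows "(\<Sum>T\<in>shifted_SYT n. card {(u, v) \<in> steps_into n A T. next_cell u v}) = card (shifted_SYT n)"
proof -
  let ?Y = "shifted_SYT n"
  let ?adj = "\<lambda>T. {(u, v) \<in> steps_into n A T. next_cell u v}"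
  let ?nonadj = "\<lambda>T. {(u, v) \<in> steps_into n A T. \<not> next_cell u v}"
  have split: "card (steps_into n A T) = card (?adj T) + card (?nonadj T)" for T
    by (subst card_Un_disjoint[symmetric]) (auto intro: finite_subset[OF _ finite_steps_into] arg_cong[where f = card])
  have fin: "finite ?Y" "finite (?nonadj T)" "finite (steps_out_of n A T)" for T
    by (auto intro: finite_subset[OF _ finite_steps_into] simp: finite_shifted_SYT finite_steps_out_of)
  have "(\<Sum>T\<in>?Y. card (?nonadj T)) = (\<Sum>T\<in>?Y. card (steps_out_of n A T))"
    using bij_betw_same_card[OF bij_betw_transpose_steps[of A n, OF up]] fin by simp
  moreover have "(\<Sum>T\<in>?Y. card (?adj T) + card (?nonadj T)) = (\<Sum>T\<in>?Y. Suc (card (steps_out_of n A T)))"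
    using card_steps_into[OF _ \<open>n \<ge> 2\<close> A] split by (intro sum.cong) auto
  ultimately show ?thesis
    by (simp add: sum.distrib sum_Suc)
qed

lemma uniform_expect_adjacent_steps_into:
  assumes "n \<ge> 2" "A \<subseteq> stair_shape n" "(1, 1) \<notin> A" "(n - 1, n - 1) \<in> A"
    and "\<And>u v. u \<in> A \<Longrightarrow> v \<in> stair_shape n \<Longrightarrow> next_cell u v \<Longrightarrow> v \<in> A"
  shows "uniform_expect (shifted_SYT n) (\<lambda>T. card {(u, v) \<in> steps_into n A T. next_cell u v}) = 1"
  using finite_shifted_SYT column_reading_in_shifted_SYT sum_card_adjacent_steps_into[OF assms]
  by (intro uniform_expect_eq_1) blast+

lemma horiz_in_col_eq_card_steps_into:
  "horiz_in_col n T c = card {(u, v) \<in> steps_into n {u \<in> stair_shape n. c < snd u} T. next_cell u v}"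
proof -
  let ?H = "{u \<in> stair_shape n. snd u = c \<and> horiz_adj n T u}"
  have eq: "{(u, v) \<in> steps_into n {u \<in> stair_shape n. c < snd u} T. next_cell u v} = (\<lambda>u. (u, (fst u, snd u + 1))) ` ?H"
  proof (intro equalityI subsetI)
    fix p assume "p \<in> {(u, v) \<in> steps_into n {u \<in> stair_shape n. c < snd u} T. next_cell u v}"
    then obtain u v where p: "p = (u, v)" and uv: "u \<in> stair_shape n" "v \<in> stair_shape n"
        "T v = Suc (T u)" "\<not> c < snd u" "c < snd v" "next_cell u v"
      by (auto simp: steps_into_def)
    then have "v = (fst u, snd u + 1)" "snd u = c"
      by (auto simp: next_cell_def)
    then show "p \<in> (\<lambda>u. (u, (fst u, snd u + 1))) ` ?H"
      using p uv by (auto simp: horiz_adj_def)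
  qed (auto simp: steps_into_def next_cell_def horiz_adj_def)
  have inj: "inj_on (\<lambda>u. (u, (fst u, snd u + 1))) ?H"
    by (auto simp: inj_on_def)
  show ?thesis
    by (simp only: horiz_in_col_def eq card_image[OF inj])
qed

lemma vert_in_row_eq_card_steps_into:
  "vert_in_row n T r = card {(u, v) \<in> steps_into n {u \<in> stair_shape n. r < fst u} T. next_cell u v}"
proof -
  let ?V = "{u \<in> stair_shape n. fst u = r \<and> vert_adj n T u}"
  have eq: "{(u, v) \<in> steps_into n {u \<in> stair_shape n. r < fst u} T. next_cell u v} = (\<lambda>u. (u, (fst u + 1, snd u))) ` ?V"
  proof (intro equalityI subsetI)
    fix p assume "p \<in> {(u, v) \<in> steps_into n {u \<in> stair_shape n. r < fst u} T. next_cell u v}"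
    then obtain u v where p: "p = (u, v)" and uv: "u \<in> stair_shape n" "v \<in> stair_shape n"
        "T v = Suc (T u)" "\<not> r < fst u" "r < fst v" "next_cell u v"
      by (auto simp: steps_into_def)
    then have "v = (fst u + 1, snd u)" "fst u = r"
      by (auto simp: next_cell_def)
    then show "p \<in> (\<lambda>u. (u, (fst u + 1, snd u))) ` ?V"
      using p uv by (auto simp: vert_adj_def)
  qed (auto simp: steps_into_def next_cell_def vert_adj_def)
  have inj: "inj_on (\<lambda>u. (u, (fst u + 1, snd u))) ?V"
    by (auto simp: inj_on_def)
  show ?thesis
    by (simp only: vert_in_row_def eq card_image[OF inj])
qed

theorem mainTheorem12:
  fixes n :: nat
  assumes "n \<ge> 2"
  shows "(\<forall>c. 1 \<le> c \<and> c < n - 1 \<longrightarrow> uniform_expect (shifted_SYT n) (\<lambda>T. horiz_in_col n T c) = 1)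
       \<and> (\<forall>r. 1 \<le> r \<and> r < n - 1 \<longrightarrow> uniform_expect (shifted_SYT n) (\<lambda>T. vert_in_row n T r) = 1)"
proof -
  have corner: "(n - 1, n - 1) \<in> stair_shape n"
    using assms by (simp add: stair_shape_def)
  have "uniform_expect (shifted_SYT n) (\<lambda>T. horiz_in_col n T c) = 1" if "1 \<le> c" "c < n - 1" for c
    unfolding horiz_in_col_eq_card_steps_into
    by (rule uniform_expect_adjacent_steps_into[OF assms]) (use that corner in \<open>auto simp: next_cell_def\<close>)
  moreover have "uniform_expect (shifted_SYT n) (\<lambda>T. vert_in_row n T r) = 1" if "1 \<le> r" "r < n - 1" for r
    unfolding vert_in_row_eq_card_steps_into
    by (rule uniform_expect_adjacent_steps_into[OF assms]) (use that corner in \<open>auto simp: next_cell_def\<close>)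
  ultimately show ?thesis
    by blast
qed

end
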